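(* Fix a program $e_{pgm}$ and an initial time $t_0$. For all states $(\hat\varsigma,\Xi)$ and $(\hat\varsigma',\Xi')$ of the $\mathit{CESK}^*_t\Xi$ machine, if $\mathit{inv}(\hat\varsigma,\Xi)$ holds and $(\hat\varsigma,\Xi)\longmapsto(\hat\varsigma',\Xi')$, then $\mathit{inv}(\hat\varsigma',\Xi')$ holds.
   Context: Expressions: $e::=x\mid (e\,e)\mid \lambda x.e$ over a set $\mathit{Var}$ of variables. Fix sets $\mathit{Addr}$ (addresses) and $\mathit{Time}$ (timestamps). An environment $\rho$ is a finite partial map $\mathit{Var}\rightharpoonup\mathit{Addr}$; $\rho[x\mapsto a]$ is its update; $\bot$ denotes an empty map. A value is a closure $v=(\lambda x.e,\rho)$. A store $\sigma$ is a finite partial map from $\mathit{Addr}$ to sets of values; $\sigma\sqcup[a\mapsto v]$ denotes $\sigma$ updated so that $a$ maps to $\sigma(a)\cup\{v\}$ (with $\sigma(a)=\emptyset$ if undefined). Frames: $\phi::=\mathbf{ar}(e,\rho)\mid\mathbf{fn}(v)$. The $\mathit{CESK}_t$ machine: continuations $\kappa$ are finite lists of frames ($\epsilon$ empty, $\phi:\kappa$ cons). States are $\langle e,\rho,\sigma,\kappa\rangle_t$ and $\langle v,\sigma,\kappa\rangle_t$. It is parameterized by $\mathit{alloc}$ and $\mathit{tick}$, functions from states to $\mathit{Addr}$ and $\mathit{Time}$ that depend only on the non-continuation components of a state (the same functions are used in both machines below). With $a=\mathit{alloc}$ and $u=\mathit{tick}$ of the left-hand state: $\langle x,\rho,\sigma,\kappa\rangle_t\longmapsto\langle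 v,\sigma,\kappa\rangle_u$ if $v\in\sigma(\rho(x))$; $\langle \lambda x.e,\rho,\sigma,\kappa\rangle_t\longmapsto\langle (\lambda x.e,\rho),\sigma,\kappa\rangle_u$; $\langle (e_0\,e_1),\rho,\sigma,\kappa\rangle_t\longmapsto\langle e_0,\rho,\sigma,\mathbf{ar}(e_1,\rho):\kappa\rangle_u$; $\langle v,\sigma,\mathbf{ar}(e,\rho'):\kappa\rangle_t\longmapsto\langle e,\rho',\sigma,\mathbf{fn}(v):\kappa\rangle_u$; $\langle v,\sigma,\mathbf{fn}((\lambda x.e,\rho)):\kappa\rangle_t\longmapsto\langle e,\rho[x\mapsto a],\sigma\sqcup[a\mapsto v],\kappa\rangle_u$. The $\mathit{CESK}^*_t\Xi$ machine: a context is $\tau=\langle e,\rho,\sigma\rangle_t$. Abstract continuations are $\hat\kappa::=\epsilon\mid\phi:\tau$. A continuation store $\Xi$ is a finite partial map from contexts to sets of abstract continuations ($\bot$ empty; $\Xi\sqcup[\tau\mapsto\hat\kappa]$ as for stores). States are pairs $(\hat\varsigma,\Xi)$ with $\hat\varsigma$ of the form $\langle e,\rho,\sigma,\hat\kappa\rangle_t$ or $\langle v,\sigma,\hat\kappa\rangle_t$. Steps (with $a,u$ from $\mathit{alloc},\mathit{tick}$ of $\hat\varsigma$): $(\langle x,\rho,\sigma,\hat\kappa\rangle_t,\Xi)\longmapsto(\langle v,\sigma,\hat\kappa\rangle_u,\Xi)$ if $v\in\sigma(\rho(x))$; $(\langle\lambda x.e,\rho,\sigma,\hat\kappa\rangle_t,\Xi)\longmapsto(\langle(\lambda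 x.e,\rho),\sigma,\hat\kappa\rangle_u,\Xi)$; $(\langle(e_0\,e_1),\rho,\sigma,\hat\kappa\rangle_t,\Xi)\longmapsto(\langle e_0,\rho,\sigma,\mathbf{ar}(e_1,\rho):\tau\rangle_u,\Xi\sqcup[\tau\mapsto\hat\kappa])$ where $\tau=\langle(e_0\,e_1),\rho,\sigma\rangle_t$; $(\langle v,\sigma,\mathbf{ar}(e,\rho'):\tau\rangle_t,\Xi)\longmapsto(\langle e,\rho',\sigma,\mathbf{fn}(v):\tau\rangle_u,\Xi)$; $(\langle v,\sigma,\mathbf{fn}((\lambda x.e,\rho)):\tau\rangle_t,\Xi)\longmapsto(\langle e,\rho[x\mapsto a],\sigma\sqcup[a\mapsto v],\hat\kappa\rangle_u,\Xi)$ for each $\hat\kappa\in\Xi(\tau)$. Auxiliary notions: $\epsilon{+\!\!+}\epsilon=\epsilon$ and $(\phi:\tau){+\!\!+}\epsilon=\phi:\epsilon$ (a concrete continuation). $\mathit{base}(\epsilon)=\langle e_{pgm},\bot,\bot,\epsilon\rangle_{t_0}$ and $\mathit{base}(\phi:\langle e_c,\rho_c,\sigma_c\rangle_{t_c})=\langle e_c,\rho_c,\sigma_c,\epsilon\rangle_{t_c}$. $\mathit{inv}_\Xi(\Xi)$ holds iff for every context $\langle e_c,\rho_c,\sigma_c\rangle_{t_c}\in\mathrm{dom}(\Xi)$ and every $\hat\kappa_c\in\Xi(\langle e_c,\rho_c,\sigma_c\rangle_{t_c})$ we have $\mathit{base}(\hat\kappa_c)\longmapsto^*_{\mathit{CESK}_t}\langle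 e_c,\rho_c,\sigma_c,\hat\kappa_c{+\!\!+}\epsilon\rangle_{t_c}$. $\mathit{inv}(\hat\varsigma,\Xi)$ holds iff $\mathit{inv}_\Xi(\Xi)$ and $\mathit{base}(\hat\kappa)\longmapsto^*_{\mathit{CESK}_t}\hat\varsigma\{\hat\kappa:=\hat\kappa{+\!\!+}\epsilon\}$, where $\hat\kappa$ is the continuation component of $\hat\varsigma$ and $\{\hat\kappa:=\cdot\}$ replaces that component. *)

theory Defs
  imports Main
begin

datatype 'x expr = EVar 'x | EApp "'x expr" "'x expr" | ELam 'x "'x expr"

type_synonym ('x,'a) env = "'x \<rightharpoonup> 'a"

datatype ('x,'a) val = Clo 'x "'x expr" "('x,'a) env"

type_synonym ('x,'a) store = "'a \<rightharpoonup> ('x,'a) val set"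

definition mjoin :: "('k \<rightharpoonup> 'v set) \<Rightarrow> 'k \<Rightarrow> 'v \<Rightarrow> ('k \<rightharpoonup> 'v set)" where
  "mjoin m k v = m(k \<mapsto> (case m k of None \<Rightarrow> {} | Some S \<Rightarrow> S) \<union> {v})"

datatype ('x,'a) frame = Ar "'x expr" "('x,'a) env" | Fn "('x,'a) val"

text \<open>States, generic in the continuation component 'k:
  Ev e \<rho> \<sigma> \<kappa> t  is  \<langle>e,\<rho>,\<sigma>,\<kappa>\<rangle>_t,  Ap v \<sigma> \<kappa> t  is  \<langle>v,\<sigma>,\<kappa>\<rangle>_t.\<close>
datatype ('x,'a,'t,'k) state =
    Ev "'x expr" "('x,'a) env" "('x,'a) store" 'k 't
  | Ap "('x,'a) val" "('x,'a) store" 'k 't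

text \<open>The non-continuation components of a state (continuation replaced by unit).
  alloc and tick are functions of these only.\<close>
fun strip :: "('x,'a,'t,'k) state \<Rightarrow> ('x,'a,'t,unit) state" where
  "strip (Ev e r s k t) = Ev e r s () t"
| "strip (Ap v s k t) = Ap v s () t"

fun kont :: "('x,'a,'t,'k) state \<Rightarrow> 'k" where
  "kont (Ev e r s k t) = k"
| "kont (Ap v s k t) = k"

fun set_kont :: "('x,'a,'t,'k) state \<Rightarrow> 'j \<Rightarrow> ('x,'a,'t,'j) state" where
  "set_kont (Ev e r s k t) j = Ev e r s j t"
| "set_kont (Ap v s k t) j = Ap v s j t"

type_synonym ('x,'a,'t) cstate = "('x,'a,'t,('x,'a) frame list) state"

inductive cstep :: "(('x,'a,'t,unit) state \<Rightarrow> 'a) \<Rightarrow> (('x,'a,'t,unit) state \<Rightarrow> 't)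
    \<Rightarrow> ('x,'a,'t) cstate \<Rightarrow> ('x,'a,'t) cstate \<Rightarrow> bool"
  for alloc tick where
  c_var: "\<rho> x = Some a' \<Longrightarrow> \<sigma> a' = Some S \<Longrightarrow> v \<in> S \<Longrightarrow>
     cstep alloc tick (Ev (EVar x) \<rho> \<sigma> \<kappa> t)
       (Ap v \<sigma> \<kappa> (tick (strip (Ev (EVar x) \<rho> \<sigma> \<kappa> t))))"
| c_lam: "cstep alloc tick (Ev (ELam x e) \<rho> \<sigma> \<kappa> t)
       (Ap (Clo x e \<rho>) \<sigma> \<kappa> (tick (strip (Ev (ELam x e) \<rho> \<sigma> \<kappa> t))))"
| c_app: "cstep alloc tick (Ev (EApp e0 e1) \<rho> \<sigma> \<kappa> t)
       (Ev e0 \<rho> \<sigma> (Ar e1 \<rho> # \<kappa>) (tick (strip (Ev (EApp e0 e1) \<rho> \<sigma> \<kappa> t))))"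
| c_ar: "cstep alloc tick (Ap v \<sigma> (Ar e \<rho>' # \<kappa>) t)
       (Ev e \<rho>' \<sigma> (Fn v # \<kappa>) (tick (strip (Ap v \<sigma> (Ar e \<rho>' # \<kappa>) t))))"
| c_fn: "cstep alloc tick (Ap v \<sigma> (Fn (Clo x e \<rho>) # \<kappa>) t)
       (Ev e (\<rho>(x \<mapsto> alloc (strip (Ap v \<sigma> (Fn (Clo x e \<rho>) # \<kappa>) t))))
          (mjoin \<sigma> (alloc (strip (Ap v \<sigma> (Fn (Clo x e \<rho>) # \<kappa>) t))) v)
          \<kappa> (tick (strip (Ap v \<sigma> (Fn (Clo x e \<rho>) # \<kappa>) t))))"

datatype ('x,'a,'t) ctx = Ctx "'x expr" "('x,'a) env" "('x,'a) store" 't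

datatype ('x,'a,'t) akont = AEps | ACons "('x,'a) frame" "('x,'a,'t) ctx"

type_synonym ('x,'a,'t) kstore = "('x,'a,'t) ctx \<rightharpoonup> ('x,'a,'t) akont set"

type_synonym ('x,'a,'t) astate = "('x,'a,'t,('x,'a,'t) akont) state \<times> ('x,'a,'t) kstore"

inductive astep :: "(('x,'a,'t,unit) state \<Rightarrow> 'a) \<Rightarrow> (('x,'a,'t,unit) state \<Rightarrow> 't)
    \<Rightarrow> ('x,'a,'t) astate \<Rightarrow> ('x,'a,'t) astate \<Rightarrow> bool"
  for alloc tick where
  a_var: "\<rho> x = Some a' \<Longrightarrow> \<sigma> a' = Some S \<Longrightarrow> v \<in> S \<Longrightarrow>
     astep alloc tick (Ev (EVar x) \<rho> \<sigma> \<kappa> t, \<Xi>)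
       (Ap v \<sigma> \<kappa> (tick (strip (Ev (EVar x) \<rho> \<sigma> \<kappa> t))), \<Xi>)"
| a_lam: "astep alloc tick (Ev (ELam x e) \<rho> \<sigma> \<kappa> t, \<Xi>)
       (Ap (Clo x e \<rho>) \<sigma> \<kappa> (tick (strip (Ev (ELam x e) \<rho> \<sigma> \<kappa> t))), \<Xi>)"
| a_app: "astep alloc tick (Ev (EApp e0 e1) \<rho> \<sigma> \<kappa> t, \<Xi>)
       (Ev e0 \<rho> \<sigma> (ACons (Ar e1 \<rho>) (Ctx (EApp e0 e1) \<rho> \<sigma> t))
           (tick (strip (Ev (EApp e0 e1) \<rho> \<sigma> \<kappa> t))),
        mjoin \<Xi> (Ctx (EApp e0 e1) \<rho> \<sigma> t) \<kappa>)"
| a_ar: "astep alloc tick (Ap v \<sigma> (ACons (Ar e \<rho>') \<tau>) t, \<Xi>)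
       (Ev e \<rho>' \<sigma> (ACons (Fn v) \<tau>) (tick (strip (Ap v \<sigma> (ACons (Ar e \<rho>') \<tau>) t))), \<Xi>)"
| a_fn: "\<Xi> \<tau> = Some K \<Longrightarrow> \<kappa>' \<in> K \<Longrightarrow>
     astep alloc tick (Ap v \<sigma> (ACons (Fn (Clo x e \<rho>)) \<tau>) t, \<Xi>)
       (Ev e (\<rho>(x \<mapsto> alloc (strip (Ap v \<sigma> (ACons (Fn (Clo x e \<rho>)) \<tau>) t))))
          (mjoin \<sigma> (alloc (strip (Ap v \<sigma> (ACons (Fn (Clo x e \<rho>)) \<tau>) t))) v)
          \<kappa>' (tick (strip (Ap v \<sigma> (ACons (Fn (Clo x e \<rho>)) \<tau>) t))), \<Xi>)"

fun kappend_eps :: "('x,'a,'t) akont \<Rightarrow> ('x,'a) frame list" where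
  "kappend_eps AEps = []"
| "kappend_eps (ACons \<phi> \<tau>) = [\<phi>]"

fun base :: "'x expr \<Rightarrow> 't \<Rightarrow> ('x,'a,'t) akont \<Rightarrow> ('x,'a,'t) cstate" where
  "base e_pgm t0 AEps = Ev e_pgm Map.empty Map.empty [] t0"
| "base e_pgm t0 (ACons \<phi> (Ctx e\<^sub>c \<rho>\<^sub>c \<sigma>\<^sub>c t\<^sub>c)) = Ev e\<^sub>c \<rho>\<^sub>c \<sigma>\<^sub>c [] t\<^sub>c"

definition inv_Xi :: "(('x,'a,'t,unit) state \<Rightarrow> 'a) \<Rightarrow> (('x,'a,'t,unit) state \<Rightarrow> 't)
    \<Rightarrow> 'x expr \<Rightarrow> 't \<Rightarrow> ('x,'a,'t) kstore \<Rightarrow> bool" where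
  "inv_Xi alloc tick e_pgm t0 \<Xi> \<longleftrightarrow>
     (\<forall>e\<^sub>c \<rho>\<^sub>c \<sigma>\<^sub>c t\<^sub>c K \<kappa>\<^sub>c. \<Xi> (Ctx e\<^sub>c \<rho>\<^sub>c \<sigma>\<^sub>c t\<^sub>c) = Some K \<longrightarrow> \<kappa>\<^sub>c \<in> K \<longrightarrow>
        (cstep alloc tick)\<^sup>*\<^sup>* (base e_pgm t0 \<kappa>\<^sub>c) (Ev e\<^sub>c \<rho>\<^sub>c \<sigma>\<^sub>c (kappend_eps \<kappa>\<^sub>c) t\<^sub>c))"

definition inv :: "(('x,'a,'t,unit) state \<Rightarrow> 'a) \<Rightarrow> (('x,'a,'t,unit) state \<Rightarrow> 't)
    \<Rightarrow> 'x expr \<Rightarrow> 't \<Rightarrow> ('x,'a,'t) astate \<Rightarrow> bool" where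
  "inv alloc tick e_pgm t0 st \<longleftrightarrow>
     (case st of (s, \<Xi>) \<Rightarrow>
        inv_Xi alloc tick e_pgm t0 \<Xi> \<and>
        (cstep alloc tick)\<^sup>*\<^sup>* (base e_pgm t0 (kont s)) (set_kont s (kappend_eps (kont s))))"

end

theory Submission
  imports Defs
begin

text \<open>A context \<tau> in the continuation store
  records a concrete run from the base of one of its stored continuations up to \<tau> with that
  continuation's top frame; a run from \<tau> itself (with empty stack) can therefore be resumed on
  top of that frame, because alloc and tick never inspect the continuation.\<close>

lemma cstep_append_kont:
  assumes "cstep alloc tick s s'"
  shows "cstep alloc tick (set_kont s (kont s @ R)) (set_kont s' (kont s' @ R))"
  using assms
  by induction (auto intro: cstep.intros[simplified])

lemma rtranclp_cstep_append_kont: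
  assumes "(cstep alloc tick)\<^sup>*\<^sup>* s s'"
  shows "(cstep alloc tick)\<^sup>*\<^sup>* (set_kont s (kont s @ R)) (set_kont s' (kont s' @ R))"
  using assms
  by induction (auto intro: cstep_append_kont rtranclp.rtrancl_into_rtrancl)

lemma inv_Xi_mjoin:
  assumes "inv_Xi alloc tick e_pgm t0 \<Xi>"
    and "(cstep alloc tick)\<^sup>*\<^sup>* (base e_pgm t0 \<kappa>) (Ev e \<rho> \<sigma> (kappend_eps \<kappa>) t)"
  shows "inv_Xi alloc tick e_pgm t0 (mjoin \<Xi> (Ctx e \<rho> \<sigma> t) \<kappa>)"
  using assms unfolding inv_Xi_def mjoin_def
  by (auto split: option.splits)

lemma astep_preserves_inv_Xi:
  assumes "inv alloc tick e_pgm t0 (s, \<Xi>)"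
    and "astep alloc tick (s, \<Xi>) (s', \<Xi>')"
  shows "inv_Xi alloc tick e_pgm t0 \<Xi>'"
  using assms(2,1)
  by (cases rule: astep.cases) (auto simp: inv_def intro: inv_Xi_mjoin)

lemma return_trace:
  assumes "inv_Xi alloc tick e_pgm t0 \<Xi>"
    and "\<Xi> \<tau> = Some K" and "\<kappa>' \<in> K"
    and "(cstep alloc tick)\<^sup>*\<^sup>* (base e_pgm t0 (ACons \<phi> \<tau>)) (set_kont s [\<phi>])"
  shows "(cstep alloc tick)\<^sup>*\<^sup>* (base e_pgm t0 \<kappa>') (set_kont s (\<phi> # kappend_eps \<kappa>'))"
proof -
  obtain e\<^sub>c \<rho>\<^sub>c \<sigma>\<^sub>c t\<^sub>c where \<tau>: "\<tau> = Ctx e\<^sub>c \<rho>\<^sub>c \<sigma>\<^sub>c t\<^sub>c" by (cases \<tau>)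
  have "(cstep alloc tick)\<^sup>*\<^sup>* (base e_pgm t0 \<kappa>') (Ev e\<^sub>c \<rho>\<^sub>c \<sigma>\<^sub>c (kappend_eps \<kappa>') t\<^sub>c)"
    using assms(1-3) \<tau> unfolding inv_Xi_def by blast
  moreover have "(cstep alloc tick)\<^sup>*\<^sup>* (Ev e\<^sub>c \<rho>\<^sub>c \<sigma>\<^sub>c (kappend_eps \<kappa>') t\<^sub>c) (set_kont s (\<phi> # kappend_eps \<kappa>'))"
    using rtranclp_cstep_append_kont[OF assms(4), of "kappend_eps \<kappa>'"] \<tau> by (cases s) simp_all
  ultimately show ?thesis by (rule rtranclp_trans)
qed

lemma astep_preserves_trace:
  assumes "inv alloc tick e_pgm t0 (s, \<Xi>)"
    and "astep alloc tick (s, \<Xi>) (s', \<Xi>')"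
  shows "(cstep alloc tick)\<^sup>*\<^sup>* (base e_pgm t0 (kont s')) (set_kont s' (kappend_eps (kont s')))"
  using assms(2,1)
proof (cases rule: astep.cases)
  case (a_app e0 e1 \<rho> \<sigma> \<kappa> t)
  then show ?thesis by (auto intro: cstep.c_app[of _ _ _ _ _ _ "[]", simplified])
next
  case (a_ar v \<sigma> e \<rho>' \<tau> t)
  then show ?thesis using assms(1)
    by (cases \<tau>) (auto simp: inv_def intro: rtranclp.rtrancl_into_rtrancl cstep.c_ar[simplified])
next
  case (a_fn \<tau> K \<kappa>' v \<sigma> x e \<rho> t)
  then have "(cstep alloc tick)\<^sup>*\<^sup>* (base e_pgm t0 \<kappa>') (Ap v \<sigma> (Fn (Clo x e \<rho>) # kappend_eps \<kappa>') t)"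
    using assms(1) return_trace[of _ _ _ _ \<Xi> \<tau> K \<kappa>' "Fn (Clo x e \<rho>)" "Ap v \<sigma> () t"]
    by (auto simp: inv_def)
  with a_fn show ?thesis by (auto intro: rtranclp.rtrancl_into_rtrancl cstep.c_fn[simplified])
qed (use assms(1) in \<open>auto simp: inv_def intro: rtranclp.rtrancl_into_rtrancl cstep.intros[simplified]\<close>)

theorem mainTheorem3:
  fixes alloc :: "('x,'a,'t,unit) state \<Rightarrow> 'a"
    and tick :: "('x,'a,'t,unit) state \<Rightarrow> 't"
    and e_pgm :: "'x expr" and t0 :: 't
    and s s' :: "('x,'a,'t,('x,'a,'t) akont) state"
    and \<Xi> \<Xi>' :: "('x,'a,'t) kstore"
  assumes "inv alloc tick e_pgm t0 (s, \<Xi>)"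
    and "astep alloc tick (s, \<Xi>) (s', \<Xi>')"
  shows "inv alloc tick e_pgm t0 (s', \<Xi>')"
  using astep_preserves_inv_Xi[OF assms] astep_preserves_trace[OF assms]
  by (simp add: inv_def)

end
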